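(* Let $s_1,s_2\ge0$ be integers and let $B^{s_1,s_2}(r_1,r_2;p_1,p_2)$ be as defined in the context. For all integers $r_1\ge1$, $r_2\ge0$, $p_2\ge0$ and $0\le p_1\le r_1-1$ with $(r_1-1)-p_1\ge p_2-r_2$, $$B^{s_1,s_2}(r_1,r_2;p_1,p_2)=B^{s_1,s_2}(r_1-1,r_2;p_1-1,p_2)+B^{s_1,s_2}(r_1-1,r_2+1;p_1,p_2)+(2p_1+2s_1)\,B^{s_1,s_2}(r_1-1,r_2;p_1,p_2).$$ In particular, when $p_2=0$, $$B^{s_1,s_2}(r_1,r_2;p_1,0)=B^{s_1,s_2}(r_1-1,r_2;p_1-1,0)+(2p_1+2s_1+s_2)\,B^{s_1,s_2}(r_1-1,r_2;p_1,0),$$ and this holds in particular when $r_2=0$.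
   Context: $S(n,m)$ denotes the Stirling number of the second kind, with the conventions $S(0,0)=1$, $S(n,0)=0$ for $n\ge1$, and $S(n,m)=0$ whenever $m>n$ or $m<0$; also $0^0=1$ and $\binom{n}{i}=0$ unless $0\le i\le n$. For nonnegative integers $s_1,s_2,r_1,r_2$ and integers $p_1,p_2$ define $$B^{s_1,s_2}(r_1,r_2;p_1,p_2)=\sum_{i=0}^{r_1}\binom{r_1}{i}2^{\,i-p_1}S(i,p_1)\sum_{j=0}^{r_1-i}\binom{r_1-i}{j}(2s_1+s_2)^{r_1-i-j}\sum_{l=0}^{r_2}\binom{r_2}{l}s_2^{\,r_2-l}S(l+j,p_2)$$ (terms with $i<p_1$ vanish since $S(i,p_1)=0$). In the paper this number is written $B^{s_1,s_2}_{2r_1+r_2,\,2p_1+p_2}$. *)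

theory Defs
  imports Main "HOL-Combinatorics.Stirling" Complex_Main
begin

definition S2 :: "nat \<Rightarrow> int \<Rightarrow> nat" where
  "S2 n m = (if m < 0 then 0 else Stirling n (nat m))"

definition B :: "nat \<Rightarrow> nat \<Rightarrow> nat \<Rightarrow> nat \<Rightarrow> int \<Rightarrow> int \<Rightarrow> real" where
  "B s1 s2 r1 r2 p1 p2 =
    (\<Sum>i=0..r1. real (r1 choose i) * (2::real) powi (int i - p1) * real (S2 i p1) *
      (\<Sum>j=0..r1-i. real ((r1-i) choose j) * real (2*s1+s2) ^ (r1-i-j) *
        (\<Sum>l=0..r2. real (r2 choose l) * real s2 ^ (r2-l) * real (S2 (l+j) p2))))"

end

theory Submission
  imports Defs
begin

text \<open>
  In \<open>r\<^sub>1\<close>, \<open>B\<close> is the binomial convolution of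
  \<open>a(i) = 2^(i-p\<^sub>1) S(i,p\<^sub>1)\<close> (\<open>pow2_S2\<close>) with
  \<open>h(n) = \<Sum>\<^sub>j C(n,j) (2s\<^sub>1+s\<^sub>2)^(n-j) g(j)\<close> (\<open>B_tail\<close>), where
  \<open>g(j) = \<Sum>\<^sub>l C(r\<^sub>2,l) s\<^sub>2^(r\<^sub>2-l) S(l+j,p\<^sub>2)\<close> (\<open>S2_shift_sum\<close>).
  Pascal's rule turns \<open>r\<^sub>1 \<mapsto> r\<^sub>1+1\<close> into a shift of either factor.
  Shifting \<open>a\<close> is the Stirling recurrence \<open>a\<^sub>p(i+1) = 2p a\<^sub>p(i) + a\<^sub>p\<^sub>-\<^sub>1(i)\<close>.
  Shifting \<open>h\<close> splits the weight \<open>2s\<^sub>1+s\<^sub>2\<close>: the part \<open>s\<^sub>2\<close> together with the shift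
  \<open>j \<mapsto> j+1\<close> of \<open>g\<close> is exactly what raising \<open>r\<^sub>2\<close> by one produces, leaving \<open>2s\<^sub>1 h(n)\<close>.
  For \<open>p\<^sub>2 = 0\<close> only \<open>S(0,0)\<close> survives in \<open>g\<close>, so raising \<open>r\<^sub>2\<close> just multiplies by \<open>s\<^sub>2\<close>.
\<close>

definition binom_conv :: "nat \<Rightarrow> (nat \<Rightarrow> nat \<Rightarrow> 'a::comm_semiring_1) \<Rightarrow> 'a" where
  "binom_conv n f = (\<Sum>i\<le>n. of_nat (n choose i) * f i (n - i))"

lemma binom_conv_add:
  "binom_conv n (\<lambda>i k. f i k + g i k) = binom_conv n f + binom_conv n g"
  by (simp add: binom_conv_def algebra_simps sum.distrib)

lemma binom_conv_cmult:
  "binom_conv n (\<lambda>i k. c * f i k) = c * binom_conv n f"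
  by (simp add: binom_conv_def sum_distrib_left mult_ac)

lemma binom_conv_diff:
  fixes f g :: "nat \<Rightarrow> nat \<Rightarrow> 'a::comm_ring_1"
  shows "binom_conv n (\<lambda>i k. f i k - g i k) = binom_conv n f - binom_conv n g"
  by (simp add: binom_conv_def algebra_simps sum_subtractf)

lemma binom_conv_Suc:
  "binom_conv (Suc n) f = binom_conv n (\<lambda>i k. f i (Suc k)) + binom_conv n (\<lambda>i k. f (Suc i) k)"
proof -
  have "binom_conv (Suc n) f
      = f 0 (Suc n) + (\<Sum>i\<le>n. of_nat (n choose Suc i) * f (Suc i) (n - i))
        + (\<Sum>i\<le>n. of_nat (n choose i) * f (Suc i) (n - i))"
    unfolding binom_conv_def sum.atMost_Suc_shift by (simp add: distrib_right sum.distrib add_ac)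
  also have "f 0 (Suc n) + (\<Sum>i\<le>n. of_nat (n choose Suc i) * f (Suc i) (n - i))
      = (\<Sum>i\<le>Suc n. of_nat (n choose i) * f i (Suc n - i))"
    unfolding sum.atMost_Suc_shift by simp
  also have "\<dots> = binom_conv n (\<lambda>i k. f i (Suc k))"
    by (simp add: binom_conv_def Suc_diff_le binomial_eq_0)
  finally show ?thesis by (simp add: binom_conv_def)
qed

lemma S2_Suc: "real (S2 (Suc i) p) = of_int p * real (S2 i p) + real (S2 i (p - 1))"
proof (cases "p \<ge> 1")
  case True
  then obtain k where "p = int (Suc k)"
    using nonneg_int_cases[of "p - 1"] by (metis add.commute diff_add_cancel le_add_same_cancel1 of_nat_Suc)
  then show ?thesis by (simp add: S2_def del: of_nat_Suc) (simp add: algebra_simps)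
next
  case False
  then show ?thesis by (cases "p = 0") (auto simp: S2_def)
qed

definition pow2_S2 :: "int \<Rightarrow> nat \<Rightarrow> real" where
  "pow2_S2 p i = 2 powi (int i - p) * real (S2 i p)"

lemma pow2_S2_Suc: "pow2_S2 p (Suc i) = 2 * of_int p * pow2_S2 p i + pow2_S2 (p - 1) i"
proof -
  have "(2::real) powi (int (Suc i) - p) = 2 * 2 powi (int i - p)"
    and "(2::real) powi (int i - (p - 1)) = 2 * 2 powi (int i - p)"
    using power_int_add_1[of "2::real" "int i - p"] by (simp_all add: algebra_simps)
  then show ?thesis unfolding pow2_S2_def S2_Suc by (simp add: algebra_simps)
qed

definition S2_shift_sum :: "nat \<Rightarrow> int \<Rightarrow> nat \<Rightarrow> nat \<Rightarrow> real" where
  "S2_shift_sum s2 p2 r2 j = binom_conv r2 (\<lambda>l k. real s2 ^ k * real (S2 (l + j) p2))"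

definition B_tail :: "nat \<Rightarrow> nat \<Rightarrow> int \<Rightarrow> nat \<Rightarrow> nat \<Rightarrow> real" where
  "B_tail s1 s2 p2 r2 n = binom_conv n (\<lambda>j k. real (2*s1+s2) ^ k * S2_shift_sum s2 p2 r2 j)"

lemma B_eq_binom_conv:
  "B s1 s2 r1 r2 p1 p2 = binom_conv r1 (\<lambda>i k. pow2_S2 p1 i * B_tail s1 s2 p2 r2 k)"
  unfolding B_def binom_conv_def B_tail_def S2_shift_sum_def pow2_S2_def atLeast0AtMost
  by (rule sum.cong) (simp_all add: mult_ac)

lemma S2_shift_sum_Suc:
  "S2_shift_sum s2 p2 (Suc r2) j = real s2 * S2_shift_sum s2 p2 r2 j + S2_shift_sum s2 p2 r2 (Suc j)"
  unfolding S2_shift_sum_def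
  by (subst binom_conv_Suc) (simp add: binom_conv_cmult[symmetric] mult_ac)

lemma B_tail_Suc:
  "B_tail s1 s2 p2 r2 (Suc n) = B_tail s1 s2 p2 (Suc r2) n + 2 * real s1 * B_tail s1 s2 p2 r2 n"
proof -
  let ?c = "real (2*s1+s2)"
  have "B_tail s1 s2 p2 r2 (Suc n)
      = binom_conv n (\<lambda>j k. ?c * (?c ^ k * S2_shift_sum s2 p2 r2 j))
        + binom_conv n (\<lambda>j k. ?c ^ k * S2_shift_sum s2 p2 (Suc r2) j
                                - real s2 * (?c ^ k * S2_shift_sum s2 p2 r2 j))"
    unfolding B_tail_def by (subst binom_conv_Suc) (simp add: S2_shift_sum_Suc algebra_simps)
  also have "\<dots> = B_tail s1 s2 p2 (Suc r2) n + 2 * real s1 * B_tail s1 s2 p2 r2 n"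
    unfolding binom_conv_cmult binom_conv_diff B_tail_def[symmetric] by (simp add: algebra_simps)
  finally show ?thesis .
qed

lemma B_Suc_r1:
  "B s1 s2 (Suc r1) r2 p1 p2 = B s1 s2 r1 r2 (p1 - 1) p2 + B s1 s2 r1 (Suc r2) p1 p2
     + (2 * of_int p1 + 2 * real s1) * B s1 s2 r1 r2 p1 p2"
proof -
  have "B s1 s2 (Suc r1) r2 p1 p2 =
      binom_conv r1 (\<lambda>i k. pow2_S2 p1 i * B_tail s1 s2 p2 (Suc r2) k
                          + 2 * real s1 * (pow2_S2 p1 i * B_tail s1 s2 p2 r2 k))
      + binom_conv r1 (\<lambda>i k. 2 * of_int p1 * (pow2_S2 p1 i * B_tail s1 s2 p2 r2 k)
                          + pow2_S2 (p1 - 1) i * B_tail s1 s2 p2 r2 k)"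
    unfolding B_eq_binom_conv
    by (subst binom_conv_Suc) (simp add: B_tail_Suc pow2_S2_Suc algebra_simps)
  then show ?thesis
    unfolding binom_conv_add binom_conv_cmult B_eq_binom_conv[symmetric] by (simp add: algebra_simps)
qed

lemma B_Suc_r2_p2_zero: "B s1 s2 r1 (Suc r2) p1 0 = real s2 * B s1 s2 r1 r2 p1 0"
proof -
  have "S2_shift_sum s2 0 r2 (Suc j) = 0" for j
    unfolding S2_shift_sum_def binom_conv_def by (simp add: S2_def)
  then have "B_tail s1 s2 0 (Suc r2) n = real s2 * B_tail s1 s2 0 r2 n" for n
    unfolding B_tail_def S2_shift_sum_Suc binom_conv_cmult[symmetric] by (simp add: mult_ac)
  then show ?thesis
    unfolding B_eq_binom_conv binom_conv_cmult[symmetric] by (simp add: mult_ac)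
qed

theorem lemma3p17:
  fixes s1 s2 r1 r2 :: nat and p1 p2 :: int
  assumes "r1 \<ge> 1" and "p2 \<ge> 0" and "0 \<le> p1" and "p1 \<le> int r1 - 1"
    and "(int r1 - 1) - p1 \<ge> p2 - int r2"
  shows "(B s1 s2 r1 r2 p1 p2 =
           B s1 s2 (r1-1) r2 (p1-1) p2 + B s1 s2 (r1-1) (r2+1) p1 p2
           + (2*of_int p1 + 2*real s1) * B s1 s2 (r1-1) r2 p1 p2)
       \<and> (B s1 s2 r1 r2 p1 0 =
           B s1 s2 (r1-1) r2 (p1-1) 0
           + (2*of_int p1 + 2*real s1 + real s2) * B s1 s2 (r1-1) r2 p1 0)"
proof -
  obtain n where r1: "r1 = Suc n" using assms(1) by (cases r1) auto
  show ?thesis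
    using B_Suc_r1[of s1 s2 n r2 p1 p2] B_Suc_r1[of s1 s2 n r2 p1 0] B_Suc_r2_p2_zero[of s1 s2 n r2 p1]
    by (simp add: r1 algebra_simps)
qed

end
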